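(* Let $V$ be a simple vertex operator algebra containing a rational subVOA $W$ whose Virasoro element equals that of $V$. Then $V$ is projective as a $V$-module.
   Context: A VOA is rational if all its modules are completely reducible. $\mathrm{mod}(V)$ is the category of $\mathbb{N}$-graded $V$-modules with composition series of finite length; $P\in\mathrm{mod}(V)$ is projective if every $V$-epimorphism $X\to P$ with $X\in\mathrm{mod}(V)$ splits. *)

theory Defs
  imports Complex_Main
begin

class cvs = ab_group_add +
  fixes cscale :: "complex \<Rightarrow> 'a \<Rightarrow> 'a"  (infixr "*c" 75)
  assumes cscale_add_right: "k *c (x + y) = k *c x + k *c y"
    and cscale_add_left: "(k + l) *c x = k *c x + l *c x"
    and cscale_assoc: "k *c (l *c x) = (k * l) *c x"
    and cscale_one: "1 *c x = x"

abbreviation csubspace :: "'a::cvs set \<Rightarrow> bool" where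
  "csubspace S \<equiv> module.subspace cscale S"

abbreviation cspan :: "'a::cvs set \<Rightarrow> 'a set" where
  "cspan S \<equiv> module.span cscale S"

text \<open>A vertex operator is given by its modes: Y a n b is the n-th product a_(n) b,
  i.e. Y(a,z) b = sum over n of (Y a n b) z^(-n-1).  The Jacobi identity is stated in
  its equivalent Borcherds (mode) form; under truncation all sums below are finite,
  which is expressed by requiring equality of all sufficiently long partial sums.\<close>

definition borcherds ::
  "('v::cvs \<Rightarrow> int \<Rightarrow> 'v \<Rightarrow> 'v) \<Rightarrow> ('v \<Rightarrow> int \<Rightarrow> 'm::cvs \<Rightarrow> 'm) \<Rightarrow>
   'v \<Rightarrow> 'v \<Rightarrow> 'm \<Rightarrow> int \<Rightarrow> int \<Rightarrow> int \<Rightarrow> bool" where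
  "borcherds Y Ym a b w p q r \<longleftrightarrow> (\<exists>K0. \<forall>K\<ge>K0.
     (\<Sum>i<K. ((of_int p :: complex) gchoose i) *c Ym (Y a (r + int i) b) (p + q - int i) w) =
     (\<Sum>i<K. ((-1) ^ i * ((of_int r :: complex) gchoose i)) *c
        (Ym a (p + r - int i) (Ym b (q + int i) w)
         - (if even r then 1 else -1) *c Ym b (q + r - int i) (Ym a (p + int i) w))))"

definition is_module ::
  "'v::cvs set \<Rightarrow> ('v \<Rightarrow> int \<Rightarrow> 'v \<Rightarrow> 'v) \<Rightarrow> 'v \<Rightarrow> 'm::cvs set \<Rightarrow> ('v \<Rightarrow> int \<Rightarrow> 'm \<Rightarrow> 'm) \<Rightarrow> bool" where
  "is_module C Y vac M Ym \<longleftrightarrow>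
     csubspace M \<and>
     (\<forall>a\<in>C. \<forall>n. \<forall>x\<in>M. Ym a n x \<in> M) \<and>
     (\<forall>a\<in>C. \<forall>n. \<forall>x\<in>M. \<forall>y\<in>M. Ym a n (x + y) = Ym a n x + Ym a n y) \<and>
     (\<forall>a\<in>C. \<forall>n. \<forall>x\<in>M. \<forall>k. Ym a n (k *c x) = k *c Ym a n x) \<and>
     (\<forall>a\<in>C. \<forall>b\<in>C. \<forall>n. \<forall>x\<in>M. Ym (a + b) n x = Ym a n x + Ym b n x) \<and>
     (\<forall>a\<in>C. \<forall>k. \<forall>n. \<forall>x\<in>M. Ym (k *c a) n x = k *c Ym a n x) \<and>
     (\<forall>a\<in>C. \<forall>x\<in>M. \<exists>N. \<forall>n\<ge>N. Ym a n x = 0) \<and>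
     (\<forall>n. \<forall>x\<in>M. Ym vac n x = (if n = -1 then x else 0)) \<and>
     (\<forall>a\<in>C. \<forall>b\<in>C. \<forall>x\<in>M. \<forall>p q r. borcherds Y Ym a b x p q r)"

text \<open>Weight spaces V_k = {v. L(0) v = k v}, where L(n) = omega_(n+1).\<close>

definition wsp :: "'v::cvs set \<Rightarrow> ('v \<Rightarrow> int \<Rightarrow> 'v \<Rightarrow> 'v) \<Rightarrow> 'v \<Rightarrow> int \<Rightarrow> 'v set" where
  "wsp C Y \<omega> k = {v \<in> C. Y \<omega> 1 v = of_int k *c v}"

definition is_voa :: "'v::cvs set \<Rightarrow> ('v \<Rightarrow> int \<Rightarrow> 'v \<Rightarrow> 'v) \<Rightarrow> 'v \<Rightarrow> 'v \<Rightarrow> bool" where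
  "is_voa C Y vac \<omega> \<longleftrightarrow>
     is_module C Y vac C Y \<and> vac \<in> C \<and> \<omega> \<in> C \<and>
     (\<forall>a\<in>C. Y a (-1) vac = a \<and> (\<forall>n\<ge>0. Y a n vac = 0)) \<and>
     (\<exists>c::complex. \<forall>m n :: int. \<forall>v\<in>C.
        Y \<omega> (m + 1) (Y \<omega> (n + 1) v) - Y \<omega> (n + 1) (Y \<omega> (m + 1) v) =
          of_int (m - n) *c Y \<omega> (m + n + 1) v
          + (if m + n = 0 then (of_int (m ^ 3 - m) / 12 * c) *c v else 0)) \<and>
     (\<forall>a\<in>C. \<forall>n. \<forall>v\<in>C. Y (Y \<omega> 0 a) n v = (- of_int n) *c Y a (n - 1) v) \<and>
     C \<subseteq> cspan (\<Union>k. wsp C Y \<omega> k) \<and>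
     (\<forall>k. \<exists>B. finite B \<and> wsp C Y \<omega> k \<subseteq> cspan B) \<and>
     (\<exists>N. \<forall>k<N. wsp C Y \<omega> k \<subseteq> {0})"

definition ngradable ::
  "'v::cvs set \<Rightarrow> ('v \<Rightarrow> int \<Rightarrow> 'v \<Rightarrow> 'v) \<Rightarrow> 'v \<Rightarrow> 'm::cvs set \<Rightarrow> ('v \<Rightarrow> int \<Rightarrow> 'm \<Rightarrow> 'm) \<Rightarrow> bool" where
  "ngradable C Y \<omega> M Ym \<longleftrightarrow> (\<exists>g :: nat \<Rightarrow> 'm set.
     (\<forall>n. csubspace (g n) \<and> g n \<subseteq> M) \<and>
     M \<subseteq> cspan (\<Union>n. g n) \<and>
     (\<forall>F x. finite F \<and> (\<forall>n\<in>F. x n \<in> g n) \<and> sum x F = 0 \<longrightarrow> (\<forall>n\<in>F. x n = 0)) \<and>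
     (\<forall>k m. \<forall>a\<in>wsp C Y \<omega> k. \<forall>n. \<forall>x\<in>g n.
        Ym a m x \<in> (if k - m - 1 + int n \<ge> 0 then g (nat (k - m - 1 + int n)) else {0})))"

definition submod :: "'v set \<Rightarrow> 'm::cvs set \<Rightarrow> ('v \<Rightarrow> int \<Rightarrow> 'm \<Rightarrow> 'm) \<Rightarrow> 'm set \<Rightarrow> bool" where
  "submod C M Ym N \<longleftrightarrow> N \<subseteq> M \<and> csubspace N \<and> (\<forall>a\<in>C. \<forall>n. \<forall>x\<in>N. Ym a n x \<in> N)"

definition irred :: "'v set \<Rightarrow> 'm::cvs set \<Rightarrow> ('v \<Rightarrow> int \<Rightarrow> 'm \<Rightarrow> 'm) \<Rightarrow> bool" where
  "irred C M Ym \<longleftrightarrow> M \<noteq> {0} \<and> (\<forall>N. submod C M Ym N \<longrightarrow> N = {0} \<or> N = M)"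

definition compl_red :: "'v set \<Rightarrow> 'm::cvs set \<Rightarrow> ('v \<Rightarrow> int \<Rightarrow> 'm \<Rightarrow> 'm) \<Rightarrow> bool" where
  "compl_red C M Ym \<longleftrightarrow> M \<subseteq> cspan (\<Union>{N. submod C M Ym N \<and> irred C N Ym})"

definition rational :: "'x::cvs itself \<Rightarrow> 'v::cvs set \<Rightarrow> ('v \<Rightarrow> int \<Rightarrow> 'v \<Rightarrow> 'v) \<Rightarrow> 'v \<Rightarrow> 'v \<Rightarrow> bool" where
  "rational _ C Y vac \<omega> \<longleftrightarrow>
     (\<forall>(M :: 'x set) Ym. is_module C Y vac M Ym \<and> ngradable C Y \<omega> M Ym \<longrightarrow> compl_red C M Ym)"

definition finlen :: "'v set \<Rightarrow> 'm::cvs set \<Rightarrow> ('v \<Rightarrow> int \<Rightarrow> 'm \<Rightarrow> 'm) \<Rightarrow> bool" where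
  "finlen C M Ym \<longleftrightarrow> (\<exists>(k::nat) (ch :: nat \<Rightarrow> 'm set).
     ch 0 = {0} \<and> ch k = M \<and> (\<forall>i\<le>k. submod C M Ym (ch i)) \<and>
     (\<forall>i<k. ch i \<subset> ch (Suc i) \<and>
        \<not> (\<exists>N. submod C M Ym N \<and> ch i \<subset> N \<and> N \<subset> ch (Suc i))))"

definition in_modV ::
  "'v::cvs set \<Rightarrow> ('v \<Rightarrow> int \<Rightarrow> 'v \<Rightarrow> 'v) \<Rightarrow> 'v \<Rightarrow> 'v \<Rightarrow> 'm::cvs set \<Rightarrow> ('v \<Rightarrow> int \<Rightarrow> 'm \<Rightarrow> 'm) \<Rightarrow> bool" where
  "in_modV C Y vac \<omega> M Ym \<longleftrightarrow> is_module C Y vac M Ym \<and> ngradable C Y \<omega> M Ym \<and> finlen C M Ym"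

definition vhom ::
  "'v set \<Rightarrow> 'm::cvs set \<Rightarrow> ('v \<Rightarrow> int \<Rightarrow> 'm \<Rightarrow> 'm) \<Rightarrow> 'n::cvs set \<Rightarrow> ('v \<Rightarrow> int \<Rightarrow> 'n \<Rightarrow> 'n)
   \<Rightarrow> ('m \<Rightarrow> 'n) \<Rightarrow> bool" where
  "vhom C M1 Y1 M2 Y2 f \<longleftrightarrow> f ` M1 \<subseteq> M2 \<and>
     (\<forall>x\<in>M1. \<forall>y\<in>M1. f (x + y) = f x + f y) \<and>
     (\<forall>k. \<forall>x\<in>M1. f (k *c x) = k *c f x) \<and>
     (\<forall>a\<in>C. \<forall>n. \<forall>x\<in>M1. f (Y1 a n x) = Y2 a n (f x))"

definition projective ::
  "'x::cvs itself \<Rightarrow> 'v::cvs set \<Rightarrow> ('v \<Rightarrow> int \<Rightarrow> 'v \<Rightarrow> 'v) \<Rightarrow> 'v \<Rightarrow> 'v \<Rightarrow>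
   'p::cvs set \<Rightarrow> ('v \<Rightarrow> int \<Rightarrow> 'p \<Rightarrow> 'p) \<Rightarrow> bool" where
  "projective _ C Y vac \<omega> P YP \<longleftrightarrow> in_modV C Y vac \<omega> P YP \<and>
     (\<forall>(X :: 'x set) YX f. in_modV C Y vac \<omega> X YX \<and> vhom C X YX P YP f \<and> f ` X = P \<longrightarrow>
        (\<exists>g. vhom C P YP X YX g \<and> (\<forall>p\<in>P. f (g p) = p)))"

end

theory Submission
  imports Defs "HOL-Library.Set_Algebras"
begin

text \<open>Since \<open>V\<close> is simple it has composition length one, so \<open>V \<in> mod(V)\<close>. Because the
  conformal vector \<open>\<omega>\<close> lies in \<open>W\<close>, every \<open>X \<in> mod(V)\<close> is an \<open>\<nat>\<close>-gradable \<open>W\<close>-module and hence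
  completely reducible over \<open>W\<close>. Given an epimorphism \<open>f : X \<rightarrow> V\<close>, pick a \<open>W\<close>-complement \<open>D\<close> of
  \<open>ker f\<close> containing a preimage \<open>c\<close> of the vacuum. Then \<open>L(-1) c = \<omega>\<^sub>0 c\<close> lies in \<open>D\<close>, and also
  in \<open>ker f\<close> because \<open>L(-1) vac = 0\<close>; so \<open>L(-1) c = 0\<close>, which forces \<open>a\<^sub>n c = 0\<close> for all
  \<open>n \<ge> 0\<close>. For such a vacuum-like vector \<open>a \<mapsto> a\<^sub>-\<^sub>1 c\<close> is a \<open>V\<close>-module map \<open>V \<rightarrow> X\<close>, and it
  splits \<open>f\<close> since \<open>f (a\<^sub>-\<^sub>1 c) = a\<^sub>-\<^sub>1 vac = a\<close>.\<close>

interpretation cvs: vector_space "cscale :: complex \<Rightarrow> 'a::cvs \<Rightarrow> 'a"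
  by unfold_locales (simp_all add: cscale_add_right cscale_add_left cscale_assoc cscale_one)

lemma sum_lessThan_eq_single:
  fixes n :: nat
  assumes "j < n" "\<And>i. i < n \<Longrightarrow> i \<noteq> j \<Longrightarrow> t i = 0"
  shows "(\<Sum>i<n. t i) = (t j :: 'a::comm_monoid_add)"
  using assms by (subst sum.remove[of "{..<n}" j]) (auto intro: sum.neutral)

lemma gbinomial_minus_two: "(-1) ^ j * ((-2 :: 'a::field_char_0) gchoose j) = of_nat (j + 1)"
proof -
  have "(-2 :: 'a) gchoose j = (-1) ^ j * (of_nat (j + 1) gchoose j)"
    using gbinomial_negated_upper[of "-2 :: 'a" j] by (simp add: algebra_simps)
  also have "(of_nat (j + 1) :: 'a) gchoose j = of_nat ((j + 1) choose j)"
    by (rule binomial_gbinomial[symmetric])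
  finally show ?thesis by (simp add: power_mult_distrib[symmetric])
qed

definition borcherds_iterate_term ::
  "('v::cvs \<Rightarrow> int \<Rightarrow> 'v \<Rightarrow> 'v) \<Rightarrow> ('v \<Rightarrow> int \<Rightarrow> 'm::cvs \<Rightarrow> 'm) \<Rightarrow>
   'v \<Rightarrow> 'v \<Rightarrow> 'm \<Rightarrow> int \<Rightarrow> int \<Rightarrow> int \<Rightarrow> nat \<Rightarrow> 'm" where
  "borcherds_iterate_term Y Ym a b w p q r i =
     ((of_int p :: complex) gchoose i) *c Ym (Y a (r + int i) b) (p + q - int i) w"

definition borcherds_commutator_term ::
  "('v::cvs \<Rightarrow> int \<Rightarrow> 'v \<Rightarrow> 'v) \<Rightarrow> ('v \<Rightarrow> int \<Rightarrow> 'm::cvs \<Rightarrow> 'm) \<Rightarrow>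
   'v \<Rightarrow> 'v \<Rightarrow> 'm \<Rightarrow> int \<Rightarrow> int \<Rightarrow> int \<Rightarrow> nat \<Rightarrow> 'm" where
  "borcherds_commutator_term Y Ym a b w p q r i =
     ((-1) ^ i * ((of_int r :: complex) gchoose i)) *c
       (Ym a (p + r - int i) (Ym b (q + int i) w)
        - (if even r then 1 else -1) *c Ym b (q + r - int i) (Ym a (p + int i) w))"

lemma borcherds_truncated:
  fixes Ym :: "'v::cvs \<Rightarrow> int \<Rightarrow> 'm::cvs \<Rightarrow> 'm"
  assumes "borcherds Y Ym a b w p q r"
    and "\<And>i. I \<le> i \<Longrightarrow> borcherds_iterate_term Y Ym a b w p q r i = 0"
    and "\<And>i. I \<le> i \<Longrightarrow> borcherds_commutator_term Y Ym a b w p q r i = 0"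
  shows "(\<Sum>i<I. borcherds_iterate_term Y Ym a b w p q r i)
       = (\<Sum>i<I. borcherds_commutator_term Y Ym a b w p q r i)"
proof -
  obtain K0 where K0: "\<And>K. K0 \<le> K \<Longrightarrow>
      (\<Sum>i<K. borcherds_iterate_term Y Ym a b w p q r i)
    = (\<Sum>i<K. borcherds_commutator_term Y Ym a b w p q r i)"
    using assms(1) unfolding borcherds_def borcherds_iterate_term_def borcherds_commutator_term_def
    by blast
  have trunc: "(\<Sum>i<I. t i) = (\<Sum>i<max K0 I. t i)"
    if "\<And>i. I \<le> i \<Longrightarrow> t i = 0" for t :: "nat \<Rightarrow> 'm"
    using that by (intro sum.mono_neutral_left) auto
  show ?thesis
    using K0[of "max K0 I"] trunc[OF assms(2)] trunc[OF assms(3)] by simp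
qed

definition vacuum_like :: "'v set \<Rightarrow> ('v \<Rightarrow> int \<Rightarrow> 'm::cvs \<Rightarrow> 'm) \<Rightarrow> 'm \<Rightarrow> bool" where
  "vacuum_like C Ym y \<longleftrightarrow> (\<forall>a\<in>C. \<forall>n\<ge>0. Ym a n y = 0)"

context
  fixes C :: "'v::cvs set" and Y :: "'v \<Rightarrow> int \<Rightarrow> 'v \<Rightarrow> 'v" and vac :: 'v
    and M :: "'m::cvs set" and Ym :: "'v \<Rightarrow> int \<Rightarrow> 'm \<Rightarrow> 'm"
  assumes module: "is_module C Y vac M Ym"
begin

lemma module_subspace: "csubspace M"
  using module by (simp add: is_module_def)

lemma module_closed: "a \<in> C \<Longrightarrow> x \<in> M \<Longrightarrow> Ym a n x \<in> M"
  using module by (simp add: is_module_def)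

lemma module_add: "a \<in> C \<Longrightarrow> x \<in> M \<Longrightarrow> y \<in> M \<Longrightarrow> Ym a n (x + y) = Ym a n x + Ym a n y"
  using module by (simp add: is_module_def)

lemma module_scale: "a \<in> C \<Longrightarrow> x \<in> M \<Longrightarrow> Ym a n (k *c x) = k *c Ym a n x"
  using module by (simp add: is_module_def)

lemma module_add_left: "a \<in> C \<Longrightarrow> b \<in> C \<Longrightarrow> x \<in> M \<Longrightarrow> Ym (a + b) n x = Ym a n x + Ym b n x"
  using module by (simp add: is_module_def)

lemma module_scale_left: "a \<in> C \<Longrightarrow> x \<in> M \<Longrightarrow> Ym (k *c a) n x = k *c Ym a n x"
  using module by (simp add: is_module_def)

lemma module_truncation: "a \<in> C \<Longrightarrow> x \<in> M \<Longrightarrow> \<exists>N. \<forall>n\<ge>N. Ym a n x = 0"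
  using module by (simp add: is_module_def)

lemma module_vacuum: "x \<in> M \<Longrightarrow> Ym vac n x = (if n = -1 then x else 0)"
  using module by (simp add: is_module_def)

lemma module_borcherds: "a \<in> C \<Longrightarrow> b \<in> C \<Longrightarrow> x \<in> M \<Longrightarrow> borcherds Y Ym a b x p q r"
  using module by (simp add: is_module_def)

lemma module_zero: "a \<in> C \<Longrightarrow> Ym a n 0 = 0"
  using module_add[of a 0 0 n] cvs.subspace_0[OF module_subspace] by simp

lemma module_zero_mode_commutator:
  assumes "a \<in> C" "b \<in> C" "y \<in> M"
  shows "Ym (Y b 0 a) q y = Ym b 0 (Ym a q y) - Ym a q (Ym b 0 y)"
  using borcherds_truncated[OF module_borcherds[OF assms(2,1,3), of 0 q 0], of 1]
  by (simp add: borcherds_iterate_term_def borcherds_commutator_term_def gbinomial_0_left)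

lemma module_one_mode_commutator:
  assumes "a \<in> C" "b \<in> C" "y \<in> M"
  shows "Ym (Y b 0 a) (m + 1) y + Ym (Y b 1 a) m y = Ym b 1 (Ym a m y) - Ym a m (Ym b 1 y)"
proof -
  have "(1 :: complex) gchoose i = 0" if "2 \<le> i" for i
    using that by (simp add: gbinomial_prod_rev)
  then show ?thesis
    using borcherds_truncated[OF module_borcherds[OF assms(2,1,3), of 1 m 0], of 2]
    by (simp add: borcherds_iterate_term_def borcherds_commutator_term_def gbinomial_0_left
        numeral_2_eq_2 add.commute)
qed

lemma module_mode_vacuum_like:
  assumes "a \<in> C" "b \<in> C" "y \<in> M" "vacuum_like C Ym y"
  shows "Ym (Y b n a) (-1) y = Ym b n (Ym a (-1) y)"
proof -
  have "Ym a (int i - 1) y = 0" "Ym b (int i) y = 0" if "1 \<le> i" for i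
    using assms(1,2,4) that by (auto simp: vacuum_like_def)
  then show ?thesis
    using borcherds_truncated[OF module_borcherds[OF assms(2,1,3), of 0 "-1" n], of 1] assms
    by (simp add: borcherds_iterate_term_def borcherds_commutator_term_def gbinomial_0_left
        module_zero vacuum_like_def)
qed

lemma vhom_mode_minus_one:
  assumes "c \<in> M" and "vacuum_like C Ym c"
  shows "vhom C C Y M Ym (\<lambda>a. Ym a (-1) c)"
  unfolding vhom_def
proof (intro conjI ballI allI)
  show "(\<lambda>a. Ym a (-1) c) ` C \<subseteq> M"
    using module_closed[OF _ assms(1)] by blast
  fix a b assume "a \<in> C" "b \<in> C"
  then show "Ym (a + b) (-1) c = Ym a (-1) c + Ym b (-1) c"
    using module_add_left[OF _ _ assms(1)] by blast
next
  fix k a assume "a \<in> C"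
  then show "Ym (k *c a) (-1) c = k *c Ym a (-1) c"
    using module_scale_left[OF _ assms(1)] by blast
next
  fix b n a assume "b \<in> C" "a \<in> C"
  then show "Ym (Y b n a) (-1) c = Ym b n (Ym a (-1) c)"
    using module_mode_vacuum_like[OF _ _ assms] by blast
qed

end

context
  fixes C :: "'v::cvs set" and Y :: "'v \<Rightarrow> int \<Rightarrow> 'v \<Rightarrow> 'v" and vac \<omega> :: 'v
  assumes voa: "is_voa C Y vac \<omega>"
begin

lemma voa_module: "is_module C Y vac C Y"
  using voa by (simp add: is_voa_def)

lemma voa_vacuum_mem: "vac \<in> C"
  using voa by (simp add: is_voa_def)

lemma voa_conformal_mem: "\<omega> \<in> C"
  using voa by (simp add: is_voa_def)

lemma voa_creation: "a \<in> C \<Longrightarrow> Y a (-1) vac = a"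
  using voa by (simp add: is_voa_def)

lemma voa_vacuum_annihilation: "a \<in> C \<Longrightarrow> 0 \<le> n \<Longrightarrow> Y a n vac = 0"
  using voa by (simp add: is_voa_def)

lemma voa_translation: "a \<in> C \<Longrightarrow> v \<in> C \<Longrightarrow> Y (Y \<omega> 0 a) n v = (- of_int n) *c Y a (n - 1) v"
  using voa by (simp add: is_voa_def)

lemma voa_translation_eq_mode_minus_two: "a \<in> C \<Longrightarrow> Y \<omega> 0 a = Y a (-2) vac"
  using voa_translation[of a vac "-1"] voa_creation[of "Y \<omega> 0 a"]
    module_closed[OF voa_module voa_conformal_mem] voa_vacuum_mem
  by (simp add: cscale_one)

end

context
  fixes C :: "'v::cvs set" and Y :: "'v \<Rightarrow> int \<Rightarrow> 'v \<Rightarrow> 'v" and vac \<omega> :: 'v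
    and M :: "'m::cvs set" and Ym :: "'v \<Rightarrow> int \<Rightarrow> 'm \<Rightarrow> 'm"
  assumes voa: "is_voa C Y vac \<omega>" and module: "is_module C Y vac M Ym"
begin

text \<open>The translation axiom of the vertex operator algebra propagates to modules because
  \<open>\<omega>\<^sub>0 a = a\<^sub>-\<^sub>2 vac\<close>, whose modes are computed by the Borcherds identity.\<close>

lemma module_translation:
  assumes a: "a \<in> C" and y: "y \<in> M" and q: "1 \<le> q"
  shows "Ym (Y \<omega> 0 a) q y = (- of_int q) *c Ym a (q - 1) y"
proof -
  define j where "j = nat (q - 1)"
  have q_eq: "q = int j + 1"
    using q by (simp add: j_def)
  let ?iterate = "borcherds_iterate_term Y Ym a vac y 0 q (-2)"
  let ?commutator = "borcherds_commutator_term Y Ym a vac y 0 q (-2)"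
  have vac_modes: "Ym vac n x = (if n = -1 then x else 0)" if "x \<in> M" for n x
    using module_vacuum[OF module that] .
  have commutator_single: "?commutator i = 0" if "i \<noteq> j" for i
    using that vac_modes[OF y] vac_modes[OF module_closed[OF module a y]] module_zero[OF module a]
    by (auto simp: borcherds_commutator_term_def q_eq)
  have iterate_single: "?iterate i = 0" if "i \<noteq> 0" for i
    using that by (simp add: borcherds_iterate_term_def gbinomial_0_left)
  have "?iterate 0 = (\<Sum>i<Suc j. ?iterate i)"
    by (rule sum_lessThan_eq_single[symmetric]) (auto intro: iterate_single)
  also have "\<dots> = (\<Sum>i<Suc j. ?commutator i)"
    using module_borcherds[OF module a voa_vacuum_mem[OF voa] y] commutator_single iterate_single
    by (intro borcherds_truncated) auto
  also have "\<dots> = ?commutator j"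
    by (rule sum_lessThan_eq_single) (auto intro: commutator_single)
  finally have "?iterate 0 = ?commutator j" .
  moreover have "?iterate 0 = Ym (Y \<omega> 0 a) q y"
    using voa_translation_eq_mode_minus_two[OF voa a] by (simp add: borcherds_iterate_term_def)
  moreover have "?commutator j = - ((1 + of_nat j) *c Ym a (int j) y)"
    using vac_modes[OF y] vac_modes[OF module_closed[OF module a y]] module_zero[OF module a]
      gbinomial_minus_two[of j, where 'a = complex]
    by (simp add: borcherds_commutator_term_def q_eq cscale_one)
  ultimately show ?thesis
    by (simp add: q_eq cvs.scale_minus_left[symmetric] del: cvs.scale_minus_left)
qed

lemma module_mode_eq_0_descend:
  assumes a: "a \<in> C" and y: "y \<in> M" and "Ym \<omega> 0 y = 0" and "0 \<le> m" and "Ym a (m + 1) y = 0"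
  shows "Ym a m y = 0"
proof -
  have \<omega>: "\<omega> \<in> C"
    using voa_conformal_mem[OF voa] .
  have "Ym (Y \<omega> 0 a) (m + 1) y = (- of_int (m + 1)) *c Ym a m y"
    using module_translation[OF a y, of "m + 1"] \<open>0 \<le> m\<close> by (simp only: add_diff_cancel_right')
  then have "(- of_int (m + 1)) *c Ym a m y = Ym (Y \<omega> 0 a) (m + 1) y" ..
  also have "\<dots> = Ym \<omega> 0 (Ym a (m + 1) y) - Ym a (m + 1) (Ym \<omega> 0 y)"
    using module_zero_mode_commutator[OF module a \<omega> y] .
  also have "\<dots> = 0"
    using assms(3,5) module_zero[OF module] a \<omega> by simp
  finally have "(- of_int (m + 1) :: complex) = 0 \<or> Ym a m y = 0"
    by (simp only: cvs.scale_eq_0_iff)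
  moreover have "(- of_int (m + 1) :: complex) \<noteq> 0"
    using \<open>0 \<le> m\<close> by (simp only: neg_equal_0_iff_equal of_int_eq_0_iff)
  ultimately show ?thesis
    by blast
qed

lemma module_vacuum_like_iff:
  assumes y: "y \<in> M"
  shows "vacuum_like C Ym y \<longleftrightarrow> Ym \<omega> 0 y = 0"
proof
  assume "vacuum_like C Ym y"
  then show "Ym \<omega> 0 y = 0"
    using voa_conformal_mem[OF voa] by (simp add: vacuum_like_def)
next
  assume translation_zero: "Ym \<omega> 0 y = 0"
  show "vacuum_like C Ym y"
    unfolding vacuum_like_def
  proof (intro ballI allI impI)
    fix a n assume a: "a \<in> C" and "0 \<le> (n :: int)"
    obtain N where N: "\<And>n. N \<le> n \<Longrightarrow> Ym a n y = 0"
      using module_truncation[OF module a y] by blast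
    have "Ym a (max N 0 - int d) y = 0" if "0 \<le> max N 0 - int d" for d
      using that
    proof (induction d)
      case 0
      then show ?case by (simp add: N)
    next
      case (Suc d)
      then show ?case
        using module_mode_eq_0_descend[OF a y translation_zero, of "max N 0 - int (Suc d)"] by simp
    qed
    from this[of "nat (max N 0 - n)"] N[of n] show "Ym a n y = 0"
      using \<open>0 \<le> n\<close> by (cases "N \<le> n") auto
  qed
qed

end

lemma additive_on_sum:
  fixes T :: "'a::cvs \<Rightarrow> 'b::cvs"
  assumes S: "csubspace S" and T_add: "\<And>x y. x \<in> S \<Longrightarrow> y \<in> S \<Longrightarrow> T (x + y) = T x + T y"
    and "finite F" and "\<And>n. n \<in> F \<Longrightarrow> x n \<in> S"
  shows "T (sum x F) = (\<Sum>n\<in>F. T (x n))"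
  using assms(3,4)
proof (induction F rule: finite_induct)
  case empty
  show ?case
    using T_add[of 0 0] cvs.subspace_0[OF S] by simp
next
  case (insert m F)
  then show ?case
    using T_add[of "x m" "sum x F"] cvs.subspace_sum[OF S, of F x] by simp
qed

lemma eigenvectors_sum_eq_0:
  fixes T :: "'a::cvs \<Rightarrow> 'a" and ev :: "'i \<Rightarrow> complex"
  assumes S: "csubspace S"
    and T_add: "\<And>x y. x \<in> S \<Longrightarrow> y \<in> S \<Longrightarrow> T (x + y) = T x + T y"
    and T_scale: "\<And>c x. x \<in> S \<Longrightarrow> T (c *c x) = c *c T x"
    and "finite F" and "inj_on ev F"
    and "\<And>n. n \<in> F \<Longrightarrow> x n \<in> S" and "\<And>n. n \<in> F \<Longrightarrow> T (x n) = ev n *c x n"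
    and "sum x F = 0"
  shows "\<forall>n\<in>F. x n = 0"
  using assms(4-)
proof (induction F arbitrary: x rule: finite_induct)
  case empty
  then show ?case by simp
next
  case (insert m F)
  define x' where "x' n = (ev n - ev m) *c x n" for n
  have x'_eigen: "x' n \<in> S" "T (x' n) = ev n *c x' n" if "n \<in> F" for n
    using that insert.prems(2,3) cvs.subspace_scale[OF S] T_scale
    by (auto simp: x'_def cscale_assoc mult.commute)
  have "(\<Sum>n\<in>insert m F. ev n *c x n) = T (sum x (insert m F))"
    using additive_on_sum[OF S T_add, of "insert m F" x] insert.hyps(1) insert.prems(2,3) by simp
  also have "\<dots> = ev m *c sum x (insert m F)"
    using insert.prems(4) T_scale[of 0 0] cvs.subspace_0[OF S] by simp
  finally have "sum x' F = 0"
    using insert.hyps by (simp add: x'_def cvs.scale_left_diff_distrib sum_subtractf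
        cvs.scale_sum_right algebra_simps)
  then have x'_0: "\<forall>n\<in>F. x' n = 0"
    using insert.IH[of x'] insert.prems(1) x'_eigen by (auto intro: inj_on_subset)
  have "\<forall>n\<in>F. x n = 0"
  proof
    fix n assume "n \<in> F"
    then have "ev n \<noteq> ev m"
      using insert.prems(1) insert.hyps(2) by (metis inj_onD insertI1 insertI2)
    then show "x n = 0"
      using x'_0[rule_format, OF \<open>n \<in> F\<close>] by (simp add: x'_def)
  qed
  then show ?case
    using insert.prems(4) insert.hyps by simp
qed

lemma irred_imp_finlen:
  assumes module: "is_module C Y vac M Ym" and "irred C M Ym"
  shows "finlen C M Ym"
proof -
  have "submod C M Ym {0}" "submod C M Ym M"
    using module_subspace[OF module] module_zero[OF module] module_closed[OF module]
    by (auto simp: submod_def cvs.subspace_0)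
  then show ?thesis
    unfolding finlen_def using assms(2) cvs.subspace_0[OF module_subspace[OF module]]
    by (intro exI[of _ 1] exI[of _ "\<lambda>i. if i = 0 then {0} else M"])
      (auto simp: irred_def less_Suc_eq_0_disj le_Suc_eq)
qed

context
  fixes C :: "'v::cvs set" and Y :: "'v \<Rightarrow> int \<Rightarrow> 'v \<Rightarrow> 'v" and vac \<omega> :: 'v
  assumes voa: "is_voa C Y vac \<omega>"
begin

lemma weight_space_subspace: "csubspace (wsp C Y \<omega> k)"
  unfolding cvs.subspace_def wsp_def
  using module_subspace[OF voa_module[OF voa]] voa_conformal_mem[OF voa]
    module_zero[OF voa_module[OF voa]] module_add[OF voa_module[OF voa]]
    module_scale[OF voa_module[OF voa]]
  by (auto simp: cvs.subspace_0 cvs.subspace_add cvs.subspace_scale cscale_add_right cscale_assoc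
      mult.commute)

lemma weight_space_mode:
  assumes a: "a \<in> wsp C Y \<omega> k" and x: "x \<in> wsp C Y \<omega> j"
  shows "Y a m x \<in> wsp C Y \<omega> (j + k - m - 1)"
proof -
  have aC: "a \<in> C" and xC: "x \<in> C"
    and La: "Y \<omega> 1 a = of_int k *c a" and Lx: "Y \<omega> 1 x = of_int j *c x"
    using a x by (auto simp: wsp_def)
  note V = voa_module[OF voa] and \<omega> = voa_conformal_mem[OF voa]
  have "Y \<omega> 1 (Y a m x) = Y (Y \<omega> 0 a) (m + 1) x + Y (Y \<omega> 1 a) m x + Y a m (Y \<omega> 1 x)"
    using module_one_mode_commutator[OF V aC \<omega> xC, of m] by (simp add: algebra_simps)
  also have "\<dots> = (- of_int (m + 1) + of_int k + of_int j) *c Y a m x"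
    using voa_translation[OF voa aC xC, of "m + 1"] La Lx module_scale_left[OF V aC xC]
      module_scale[OF V aC xC]
    by (simp add: cvs.scale_left_distrib)
  finally show ?thesis
    using module_closed[OF V aC xC] by (simp add: wsp_def algebra_simps)
qed

text \<open>The grading by \<open>\<nat>\<close> is the weight grading shifted by a lower bound \<open>N\<close> of the weights;
  its pieces are independent as eigenspaces of \<open>L(0) = \<omega>\<^sub>1\<close> for distinct eigenvalues.\<close>

lemma voa_ngradable: "ngradable C Y \<omega> C Y"
proof -
  note V = voa_module[OF voa] and \<omega> = voa_conformal_mem[OF voa]
  obtain N where N: "\<And>k. k < N \<Longrightarrow> wsp C Y \<omega> k \<subseteq> {0}"
    using voa unfolding is_voa_def by blast
  define g where "g n = wsp C Y \<omega> (N + int n)" for n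
  have "(\<Union>k. wsp C Y \<omega> k) \<subseteq> cspan (\<Union>n. g n)"
  proof (intro UN_least subsetI)
    fix k v assume v: "v \<in> wsp C Y \<omega> k"
    show "v \<in> cspan (\<Union>n. g n)"
    proof (cases "k < N")
      case True
      then show ?thesis
        using N v cvs.span_zero by blast
    next
      case False
      then have "g (nat (k - N)) = wsp C Y \<omega> k"
        by (simp add: g_def)
      then show ?thesis
        using v by (metis UN_I UNIV_I cvs.span_base)
    qed
  qed
  then have spanning: "C \<subseteq> cspan (\<Union>n. g n)"
    using voa cvs.span_minimal[of _ "cspan (\<Union>n. g n)"] unfolding is_voa_def by blast
  have independent: "\<forall>n\<in>F. x n = 0"
    if "finite F" "\<forall>n\<in>F. x n \<in> g n" "sum x F = 0" for F x
    using that module_subspace[OF V] module_add[OF V \<omega>] module_scale[OF V \<omega>]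
    by (intro eigenvectors_sum_eq_0[where T = "Y \<omega> 1" and ev = "\<lambda>n. of_int (N + int n)"])
      (auto simp: g_def wsp_def inj_on_def)
  have graded: "Y a m x \<in> (if k - m - 1 + int n \<ge> 0 then g (nat (k - m - 1 + int n)) else {0})"
    if "a \<in> wsp C Y \<omega> k" "x \<in> g n" for k m a n x
    using weight_space_mode[OF that(1), of x "N + int n" m] that(2) N[of "N + int n + k - m - 1"]
    by (auto simp: g_def algebra_simps)
  have pieces: "csubspace (g n)" "g n \<subseteq> C" for n
    unfolding g_def by (rule weight_space_subspace) (auto simp: wsp_def)
  show ?thesis
    unfolding ngradable_def
    using pieces spanning independent graded by (intro exI[of _ g] conjI allI ballI impI) auto
qed

lemma voa_in_modV:
  assumes "irred C C Y"
  shows "in_modV C Y vac \<omega> C Y"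
  using voa_module[OF voa] voa_ngradable irred_imp_finlen[OF voa_module[OF voa] assms]
  by (simp add: in_modV_def)

end

lemma subspace_set_plus:
  fixes A B :: "'a::cvs set"
  assumes A: "csubspace A" and B: "csubspace B"
  shows "csubspace (A + B)"
  unfolding cvs.subspace_def
proof (intro conjI ballI allI)
  show "0 \<in> A + B"
    using A B cvs.subspace_0 set_plus_intro[of 0 A 0 B] by force
next
  fix x y assume "x \<in> A + B" "y \<in> A + B"
  then obtain a b a' b' where "x = a + b" "y = a' + b'" "a \<in> A" "b \<in> B" "a' \<in> A" "b' \<in> B"
    by (auto elim!: set_plus_elim)
  then have "(a + a') + (b + b') \<in> A + B"
    using cvs.subspace_add[OF A] cvs.subspace_add[OF B] by (simp add: set_plus_intro)
  moreover have "x + y = (a + a') + (b + b')"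
    using \<open>x = a + b\<close> \<open>y = a' + b'\<close> by (simp add: algebra_simps)
  ultimately show "x + y \<in> A + B"
    by simp
next
  fix c x assume "x \<in> A + B"
  then obtain a b where "x = a + b" "a \<in> A" "b \<in> B"
    by (auto elim!: set_plus_elim)
  then show "c *c x \<in> A + B"
    using cvs.subspace_scale[OF A] cvs.subspace_scale[OF B] by (simp add: cscale_add_right set_plus_intro)
qed

lemma submod_subset: "submod C M Ym N \<Longrightarrow> C' \<subseteq> C \<Longrightarrow> submod C' M Ym N"
  by (auto simp: submod_def)

context
  fixes C :: "'v::cvs set" and Y :: "'v \<Rightarrow> int \<Rightarrow> 'v \<Rightarrow> 'v" and vac :: 'v
    and M :: "'m::cvs set" and Ym :: "'v \<Rightarrow> int \<Rightarrow> 'm \<Rightarrow> 'm"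
  assumes module: "is_module C Y vac M Ym"
begin

lemma submod_set_plus:
  assumes A: "submod C M Ym A" and B: "submod C M Ym B"
  shows "submod C M Ym (A + B)"
  unfolding submod_def
proof (intro conjI ballI allI)
  show "A + B \<subseteq> M"
    using A B cvs.subspace_add[OF module_subspace[OF module]]
    by (auto simp: submod_def elim!: set_plus_elim)
  show "csubspace (A + B)"
    using A B subspace_set_plus by (auto simp: submod_def)
  fix a n x assume a: "a \<in> C" and "x \<in> A + B"
  then obtain u v where "x = u + v" "u \<in> A" "v \<in> B"
    by (auto elim: set_plus_elim)
  moreover have "u \<in> M" "v \<in> M" "Ym a n u \<in> A" "Ym a n v \<in> B"
    using A B a \<open>u \<in> A\<close> \<open>v \<in> B\<close> by (auto simp: submod_def)
  ultimately show "Ym a n x \<in> A + B"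
    using module_add[OF module a] by (simp add: set_plus_intro)
qed

lemma irred_submod_extends_complement:
  assumes K: "submod C M Ym K" and D: "submod C M Ym D" and DK: "D \<inter> K \<subseteq> {0}"
    and N: "submod C M Ym N" and irr: "irred C N Ym"
  shows "\<exists>D'. submod C M Ym D' \<and> D' \<inter> K \<subseteq> {0} \<and> D \<subseteq> D' \<and> N \<subseteq> K + D'"
proof -
  have zero: "0 \<in> K" "0 \<in> D" "0 \<in> N"
    using K D N cvs.subspace_0 by (auto simp: submod_def)
  have "submod C N Ym (N \<inter> (K + D))"
    using N submod_set_plus[OF K D] cvs.subspace_inter by (auto simp: submod_def)
  then consider "N \<inter> (K + D) = N" | "N \<inter> (K + D) = {0}"
    using irr by (auto simp: irred_def)
  then show ?thesis
  proof cases
    case 1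
    then show ?thesis
      using D DK by blast
  next
    case 2
    have "(D + N) \<inter> K \<subseteq> {0}"
    proof
      fix z assume "z \<in> (D + N) \<inter> K"
      then obtain d n where z: "z = d + n" "d \<in> D" "n \<in> N" "z \<in> K"
        by (auto elim: set_plus_elim)
      have "- d \<in> D"
        using D z(2) cvs.subspace_neg by (auto simp: submod_def)
      then have "n = z + - d"
        using z(1) by simp
      then have "n = 0"
        using 2 z(3,4) \<open>- d \<in> D\<close> by blast
      then show "z \<in> {0}"
        using DK z by auto
    qed
    moreover have "D \<subseteq> D + N"
      using set_zero_plus2[OF zero(3)] by (simp add: add.commute)
    moreover have "N \<subseteq> K + (D + N)"
      using set_zero_plus2[OF zero(2)] set_zero_plus2[OF zero(1)] by blast
    ultimately show ?thesis
      using submod_set_plus[OF D N] by blast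
  qed
qed

lemma complement_covering_finite:
  assumes K: "submod C M Ym K"
    and "finite T" and "T \<subseteq> \<Union>{N. submod C M Ym N \<and> irred C N Ym}"
  shows "\<exists>D. submod C M Ym D \<and> D \<inter> K \<subseteq> {0} \<and> T \<subseteq> K + D"
  using assms(2,3)
proof (induction T rule: finite_induct)
  case empty
  have "submod C M Ym {0}"
    using module_subspace[OF module] module_zero[OF module] by (auto simp: submod_def cvs.subspace_0)
  then show ?case
    by blast
next
  case (insert t T)
  then obtain D where D: "submod C M Ym D" "D \<inter> K \<subseteq> {0}" "T \<subseteq> K + D"
    by blast
  obtain N where N: "submod C M Ym N" "irred C N Ym" "t \<in> N"
    using insert.prems by blast
  obtain D' where D': "submod C M Ym D'" "D' \<inter> K \<subseteq> {0}" "D \<subseteq> D'" "N \<subseteq> K + D'"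
    using irred_submod_extends_complement[OF K D(1,2) N(1,2)] by blast
  have "K + D \<subseteq> K + D'"
    using D'(3) by (rule set_plus_mono2[OF order_refl])
  then have "insert t T \<subseteq> K + D'"
    using D(3) N(3) D'(4) by blast
  then show ?case
    using D'(1,2) by blast
qed

lemma compl_red_complement_covering:
  assumes "compl_red C M Ym" and K: "submod C M Ym K" and "x \<in> M"
  shows "\<exists>D. submod C M Ym D \<and> D \<inter> K \<subseteq> {0} \<and> x \<in> K + D"
proof -
  have "x \<in> cspan (\<Union>{N. submod C M Ym N \<and> irred C N Ym})"
    using assms(1,3) by (auto simp: compl_red_def)
  then obtain T r where T: "finite T" "T \<subseteq> \<Union>{N. submod C M Ym N \<and> irred C N Ym}"
    and x: "x = (\<Sum>t\<in>T. r t *c t)"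
    unfolding cvs.span_explicit by auto
  obtain D where D: "submod C M Ym D" "D \<inter> K \<subseteq> {0}" "T \<subseteq> K + D"
    using complement_covering_finite[OF K T] by blast
  have "csubspace (K + D)"
    using K D(1) subspace_set_plus by (auto simp: submod_def)
  then have "x \<in> K + D"
    unfolding x using D(3) by (auto intro: cvs.subspace_sum cvs.subspace_scale)
  then show ?thesis
    using D(1,2) by blast
qed

end

lemma submod_kernel:
  assumes M: "is_module C Y vac M YM" and P: "is_module C Y vac P YP" and f: "vhom C M YM P YP f"
  shows "submod C M YM {x \<in> M. f x = 0}"
proof -
  have add: "f (x + y) = f x + f y" if "x \<in> M" "y \<in> M" for x y
    using f that by (simp add: vhom_def)
  have scale: "f (k *c x) = k *c f x" if "x \<in> M" for k x
    using f that by (simp add: vhom_def)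
  have intertwine: "f (YM a n x) = YP a n (f x)" if "a \<in> C" "x \<in> M" for a n x
    using f that by (simp add: vhom_def)
  have S: "csubspace M"
    using module_subspace[OF M] .
  have "f 0 = 0"
    using scale[of 0 0] cvs.subspace_0[OF S] by simp
  then show ?thesis
    unfolding submod_def cvs.subspace_def
    using add scale intertwine module_zero[OF P] module_closed[OF M]
      cvs.subspace_0[OF S] cvs.subspace_add[OF S] cvs.subspace_scale[OF S]
    by auto
qed

lemma module_restrict:
  assumes "is_module C Y vac M Ym" and "C' \<subseteq> C"
  shows "is_module C' Y vac M Ym"
  using assms unfolding is_module_def Ball_def subset_iff by meson

lemma ngradable_restrict:
  assumes "ngradable C Y \<omega> M Ym" and "C' \<subseteq> C"
  shows "ngradable C' Y \<omega> M Ym"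
proof -
  obtain g :: "nat \<Rightarrow> _" where pieces: "\<forall>n. csubspace (g n) \<and> g n \<subseteq> M"
    and spanning: "M \<subseteq> cspan (\<Union>n. g n)"
    and independent: "\<forall>F x. finite F \<and> (\<forall>n\<in>F. x n \<in> g n) \<and> sum x F = 0 \<longrightarrow> (\<forall>n\<in>F. x n = 0)"
    and graded: "\<forall>k m. \<forall>a\<in>wsp C Y \<omega> k. \<forall>n. \<forall>x\<in>g n.
        Ym a m x \<in> (if k - m - 1 + int n \<ge> 0 then g (nat (k - m - 1 + int n)) else {0})"
    using assms(1) unfolding ngradable_def by (elim exE conjE) assumption
  have "wsp C' Y \<omega> k \<subseteq> wsp C Y \<omega> k" for k
    using assms(2) by (auto simp: wsp_def)
  then have "\<forall>k m. \<forall>a\<in>wsp C' Y \<omega> k. \<forall>n. \<forall>x\<in>g n.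
      Ym a m x \<in> (if k - m - 1 + int n \<ge> 0 then g (nat (k - m - 1 + int n)) else {0})"
    using graded by (meson subsetD)
  then show ?thesis
    unfolding ngradable_def using pieces spanning independent by (intro exI[of _ g] conjI)
qed

lemma vacuum_like_preimage_of_vacuum:
  assumes voa: "is_voa V Y vac \<omega>" and "W \<subseteq> V" and "\<omega> \<in> W"
    and X: "is_module V Y vac X YX" and "compl_red W X YX"
    and f: "vhom V X YX V Y f" and "f ` X = V"
  shows "\<exists>c\<in>X. f c = vac \<and> vacuum_like V YX c"
proof -
  define K where "K = {x \<in> X. f x = 0}"
  have XW: "is_module W Y vac X YX"
    using module_restrict[OF X \<open>W \<subseteq> V\<close>] .
  have K: "submod W X YX K"
    unfolding K_def using submod_kernel[OF X voa_module[OF voa] f] \<open>W \<subseteq> V\<close> by (rule submod_subset)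
  obtain x0 where "x0 \<in> X" "f x0 = vac"
    using \<open>f ` X = V\<close> voa_vacuum_mem[OF voa] by force
  then obtain D where D: "submod W X YX D" "D \<inter> K \<subseteq> {0}" and "x0 \<in> K + D"
    using compl_red_complement_covering[OF XW \<open>compl_red W X YX\<close> K] by blast
  then obtain k c where kc: "x0 = k + c" "k \<in> K" "c \<in> D"
    by (auto elim: set_plus_elim)
  have "c \<in> X"
    using D(1) kc(3) by (auto simp: submod_def)
  have "f c = vac"
    using f kc \<open>c \<in> X\<close> \<open>f x0 = vac\<close> by (auto simp: K_def vhom_def)
  have \<omega>V: "\<omega> \<in> V"
    using assms(2,3) by blast
  have "YX \<omega> 0 c \<in> D"
    using D(1) \<open>\<omega> \<in> W\<close> kc(3) by (auto simp: submod_def)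
  moreover have "f (YX \<omega> 0 c) = Y \<omega> 0 (f c)"
    using f \<omega>V \<open>c \<in> X\<close> by (simp add: vhom_def)
  then have "YX \<omega> 0 c \<in> K"
    using \<open>f c = vac\<close> voa_vacuum_annihilation[OF voa \<omega>V] module_closed[OF X \<omega>V \<open>c \<in> X\<close>]
    by (simp add: K_def)
  ultimately have "YX \<omega> 0 c = 0"
    using D(2) by blast
  then show ?thesis
    using module_vacuum_like_iff[OF voa X \<open>c \<in> X\<close>] \<open>c \<in> X\<close> \<open>f c = vac\<close> by blast
qed

theorem theorem13:
  fixes V W :: "'v::cvs set" and Y :: "'v \<Rightarrow> int \<Rightarrow> 'v \<Rightarrow> 'v" and vac \<omega> :: 'v
  assumes "is_voa V Y vac \<omega>"
    and "irred V V Y"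
    and "W \<subseteq> V"
    and "is_voa W Y vac \<omega>"
    and "rational TYPE('x::cvs) W Y vac \<omega>"
  shows "projective TYPE('x) V Y vac \<omega> V Y"
  unfolding projective_def
proof (intro conjI allI impI)
  show "in_modV V Y vac \<omega> V Y"
    using voa_in_modV[OF assms(1,2)] .
next
  fix X :: "'x set" and YX f
  assume "in_modV V Y vac \<omega> X YX \<and> vhom V X YX V Y f \<and> f ` X = V"
  then have X: "is_module V Y vac X YX" and "ngradable V Y \<omega> X YX"
    and f: "vhom V X YX V Y f" and "f ` X = V"
    by (auto simp: in_modV_def)
  then have "compl_red W X YX"
    using assms(5) module_restrict[OF X assms(3)] ngradable_restrict[OF _ assms(3)]
    unfolding rational_def by blast
  then obtain c where c: "c \<in> X" "f c = vac" "vacuum_like V YX c"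
    using vacuum_like_preimage_of_vacuum[OF assms(1,3) voa_conformal_mem[OF assms(4)] X _ f]
      \<open>f ` X = V\<close> by blast
  have "f (YX p (-1) c) = p" if "p \<in> V" for p
    using f c that voa_creation[OF assms(1)] by (simp add: vhom_def)
  then show "\<exists>g. vhom V V Y X YX g \<and> (\<forall>p\<in>V. f (g p) = p)"
    using vhom_mode_minus_one[OF X c(1,3)] by blast
qed

end
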